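(* For every $n\ge1$ and every $(a_1,\dots,a_n)\in\mathbb R^n\setminus\{0\}$, the system $\dot x_i=x_i\big(\sum_{j>i}a_jx_j-\sum_{j<i}a_jx_j\big)$, $i=1,\dots,n$, admits $n-1$ functionally independent (rational) first integrals; hence it is superintegrable.
   Context: This system is the Hamiltonian vector field of $H=a_1x_1+\dots+a_nx_n$ with respect to the Poisson bracket on $\mathbb R^n$ given by $\{x_i,x_j\}=x_ix_j$ for $1\le i<j\le n$. Functional independence means the differentials are linearly independent on a dense open subset. *)

theory Defs
  imports "HOL-Analysis.Analysis"
begin

text \<open>Points of R^n are vectors real^'n, indexed by a finite linearly ordered type 'n
  (the order on indices plays the role of 1 < 2 < ... < n).\<close>

inductive poly_fun :: "(real^'n \<Rightarrow> real) \<Rightarrow> bool" where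
  pf_const: "poly_fun (\<lambda>x. c)"
| pf_coord: "poly_fun (\<lambda>x. x $ i)"
| pf_add: "poly_fun p \<Longrightarrow> poly_fun q \<Longrightarrow> poly_fun (\<lambda>x. p x + q x)"
| pf_mult: "poly_fun p \<Longrightarrow> poly_fun q \<Longrightarrow> poly_fun (\<lambda>x. p x * q x)"

definition vf :: "real^('n::{finite,linorder}) \<Rightarrow> real^('n::{finite,linorder}) \<Rightarrow> real^('n::{finite,linorder})" where
  "vf a x = (\<chi> i. x $ i * ((\<Sum>j\<in>{j. i < j}. a $ j * x $ j) - (\<Sum>j\<in>{j. j < i}. a $ j * x $ j)))"

definition first_integral_on ::
    "(real^'n \<Rightarrow> real^'n) \<Rightarrow> (real^'n \<Rightarrow> real) \<Rightarrow> (real^'n) set \<Rightarrow> bool" where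
  "first_integral_on X F U \<longleftrightarrow> open U \<and>
     (\<forall>x\<in>U. \<exists>D. (F has_derivative D) (at x) \<and> D (X x) = 0)"

definition functionally_independent :: "nat \<Rightarrow> (nat \<Rightarrow> real^'n \<Rightarrow> real) \<Rightarrow> bool" where
  "functionally_independent m F \<longleftrightarrow>
     (\<exists>U. open U \<and> closure U = UNIV \<and>
        (\<forall>x\<in>U. \<exists>D. (\<forall>k<m. (F k has_derivative D k) (at x)) \<and>
            (\<forall>c. (\<forall>v. (\<Sum>k<m. c k * D k v) = 0) \<longrightarrow> (\<forall>k<m. c k = 0))))"

definition superintegrable :: "(real^'n \<Rightarrow> real^'n) \<Rightarrow> bool" where
  "superintegrable X \<longleftrightarrow>
     (\<exists>F U. (\<forall>k<CARD('n) - 1. first_integral_on X (F k) (U k) \<and> closure (U k) = UNIV) \<and>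
            functionally_independent (CARD('n) - 1) F)"

end

theory Submission
  imports Defs
begin

text \<open>
  For A a set of indices let L_A = sum of a_i x_i over i in A. Along the field, L_A is a
  Darboux function: its cofactor is L_(-A) if A is down-closed and -L_(-A) if A is
  up-closed, while x_j has cofactor L_(>j) - L_(<j). So H = L_UNIV is conserved and, with
  f and l the first and last indices of the support of a, x_j / (L_(<=j) L_(>=j)) is a first
  integral for f < j < l. For j outside [f, l] the coordinate x_j has cofactor +H or -H, so
  x_j / W resp. x_j W is a first integral for any W with cofactor H: W = L_(<=f) / L_(>f) if
  f < l, and a coordinate outside the support if f = l. Dropping the index z used by W
  leaves n - 1 rational integrals. At a generic point their differentials are triangular
  with respect to the directions e_j (j outside the interior of [f, l]) and
  e_j - (a_j / a_l) e_l (f < j < l), hence linearly independent.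
\<close>

definition lform :: "real^'n \<Rightarrow> 'n set \<Rightarrow> real^'n \<Rightarrow> real" where
  "lform a A x = (\<Sum>i\<in>A. a$i * x$i)"

lemma lform_eq_inner: "lform a A x = (\<chi> i. if i \<in> A then a$i else 0) \<bullet> x"
proof -
  have "(\<chi> i. if i \<in> A then a$i else 0) \<bullet> x = (\<Sum>i\<in>UNIV. if i \<in> A then a$i * x$i else 0)"
    unfolding inner_vec_def by (rule sum.cong) auto
  then show ?thesis by (simp add: lform_def sum.If_cases)
qed

lemma bounded_linear_lform: "bounded_linear (lform a A)"
  unfolding lform_eq_inner by (rule bounded_linear_inner_right)

lemma has_derivative_lform: "(lform a A has_derivative lform a A) (at x)"
  by (rule bounded_linear_imp_has_derivative[OF bounded_linear_lform])

lemma lform_add_scaleR: "lform a A (x + t *\<^sub>R v) = lform a A x + t * lform a A v"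
  unfolding lform_eq_inner by (simp add: inner_add_right)

lemma lform_axis: "lform a A (axis j 1) = (if j \<in> A then a$j else 0)"
  unfolding lform_def axis_def by (auto simp: if_distrib sum.If_cases)

lemma lform_Compl: "lform a (- A) x = lform a UNIV x - lform a A x"
  unfolding lform_def by (simp add: Compl_eq_Diff_UNIV sum_diff)

lemma closure_lform_nonzero:
  assumes "k \<in> A" "a$k \<noteq> 0"
  shows "closure {x. lform a A x \<noteq> 0} = UNIV"
proof -
  let ?c = "\<chi> i. if i \<in> A then a$i else 0"
  have "?c \<noteq> 0" using assms by (auto simp: vec_eq_iff)
  moreover have "{x. ?c \<bullet> x \<noteq> 0} = - {x. ?c \<bullet> x = 0}" by auto
  ultimately show ?thesis unfolding lform_eq_inner by (simp add: closure_complement)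
qed

lemma closure_coordinate_nonzero: "closure {x::real^'n. x$k \<noteq> 0} = UNIV"
proof -
  have "{x::real^'n. x$k \<noteq> 0} = - {x. x$k = 0}" by auto
  then show ?thesis by (simp add: closure_complement interior_standard_hyperplane)
qed

lemma lform_atMost:
  fixes j :: "'n::{finite,linorder}"
  shows "lform a {..j} x = lform a {..<j} x + a$j * x$j"
proof -
  have "{..j} = insert j {..<j}" by auto
  then show ?thesis by (simp add: lform_def)
qed

lemma poly_fun_sum: "finite A \<Longrightarrow> (\<And>i. i \<in> A \<Longrightarrow> poly_fun (g i)) \<Longrightarrow> poly_fun (\<lambda>x. \<Sum>i\<in>A. g i x)"
proof (induction A rule: finite_induct)
  case empty
  then show ?case using pf_const[of 0] by simp
next
  case (insert i A)
  then show ?case using pf_add[of "g i" "\<lambda>x. \<Sum>i\<in>A. g i x"] by simp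
qed

lemma poly_fun_lform: "poly_fun (lform a (A :: 'n::finite set))"
  unfolding lform_def by (rule poly_fun_sum) (auto intro: pf_mult pf_const pf_coord)

lemma continuous_on_poly_fun: "poly_fun p \<Longrightarrow> continuous_on UNIV p"
  by (induction rule: poly_fun.induct) (auto intro!: continuous_intros)

lemma sum_sum_antisym:
  assumes "\<And>i j. h j i = - h i j"
  shows "(\<Sum>i\<in>A. \<Sum>j\<in>A. h i j) = (0 :: 'a::linordered_ab_group_add)"
proof -
  have "(\<Sum>i\<in>A. \<Sum>j\<in>A. h i j) = (\<Sum>j\<in>A. \<Sum>i\<in>A. h i j)" by (rule sum.swap)
  also have "\<dots> = (\<Sum>j\<in>A. \<Sum>i\<in>A. - h j i)" by (intro sum.cong refl) (rule assms)
  also have "\<dots> = - (\<Sum>i\<in>A. \<Sum>j\<in>A. h i j)" by (simp add: sum_negf)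
  finally show ?thesis by (simp add: neg_equal_zero)
qed

lemma vf_nth:
  "vf a x $ i = x$i * (\<Sum>j\<in>UNIV. (if i < j then 1 else if j < i then -1 else 0) * (a$j * x$j))"
proof -
  let ?c = "\<lambda>j. a$j * x$j"
  have "(\<Sum>j\<in>UNIV. (if i < j then 1 else if j < i then -1 else 0) * ?c j)
      = (\<Sum>j\<in>UNIV. if i < j then ?c j else 0) - (\<Sum>j\<in>UNIV. if j < i then ?c j else 0)"
    by (subst sum_subtractf[symmetric]) (rule sum.cong, auto)
  then show ?thesis by (simp add: vf_def sum.If_cases)
qed

lemma lform_vf:
  "lform a A (vf a x) =
     (\<Sum>i\<in>A. \<Sum>j\<in>-A. (if i < j then 1 else if j < i then -1 else 0) * ((a$i * x$i) * (a$j * x$j)))"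
proof -
  define h where "h i j = (if i < j then 1 else if j < i then -1 else 0) * ((a$i * x$i) * (a$j * x$j))" for i j
  have "lform a A (vf a x) = (\<Sum>i\<in>A. \<Sum>j\<in>UNIV. h i j)"
    by (simp add: lform_def vf_nth h_def sum_distrib_left mult_ac)
  also have "\<dots> = (\<Sum>i\<in>A. \<Sum>j\<in>A. h i j) + (\<Sum>i\<in>A. \<Sum>j\<in>-A. h i j)"
    by (simp add: Compl_eq_Diff_UNIV sum_diff flip: sum.distrib)
  also have "(\<Sum>i\<in>A. \<Sum>j\<in>A. h i j) = 0"
    by (rule sum_sum_antisym) (auto simp: h_def)
  finally show ?thesis by (simp add: h_def)
qed

lemma lform_vf_down_closed:
  assumes "\<And>i j. i \<in> A \<Longrightarrow> j < i \<Longrightarrow> j \<in> A"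
  shows "lform a A (vf a x) = lform a A x * lform a (-A) x"
proof -
  have "(if i < j then 1 else if j < i then -1 else 0) = (1::real)" if "i \<in> A" "j \<in> -A" for i j
    using assms that by (metis ComplD linorder_neqE)
  then show ?thesis
    unfolding lform_vf unfolding lform_def sum_product by (intro sum.cong refl) simp
qed

lemma lform_vf_up_closed:
  assumes "\<And>i j. i \<in> A \<Longrightarrow> i < j \<Longrightarrow> j \<in> A"
  shows "lform a A (vf a x) = - (lform a A x * lform a (-A) x)"
proof -
  have "(if i < j then 1 else if j < i then -1 else 0) = (-1::real)" if "i \<in> A" "j \<in> -A" for i j
    using assms that by (metis ComplD linorder_neqE less_asym)
  then show ?thesis
    unfolding lform_vf unfolding lform_def sum_product sum_negf[symmetric] by (intro sum.cong refl) simp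
qed

definition has_cofactor ::
    "real^('n::{finite,linorder}) \<Rightarrow> (real^('n::{finite,linorder}) \<Rightarrow> real) \<Rightarrow> real
      \<Rightarrow> real^('n::{finite,linorder}) \<Rightarrow> bool" where
  "has_cofactor a g c x \<longleftrightarrow> (\<exists>D. (g has_derivative D) (at x) \<and> D (vf a x) = c * g x)"

lemma has_cofactor_const: "has_cofactor a (\<lambda>x. k) 0 x"
  unfolding has_cofactor_def by (intro exI[of _ "\<lambda>_. 0"]) auto

lemma has_cofactor_mult:
  assumes "has_cofactor a f c x" "has_cofactor a g d x"
  shows "has_cofactor a (\<lambda>x. f x * g x) (c + d) x"
proof -
  obtain Df Dg where f: "(f has_derivative Df) (at x)" "Df (vf a x) = c * f x"
    and g: "(g has_derivative Dg) (at x)" "Dg (vf a x) = d * g x"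
    using assms unfolding has_cofactor_def by blast
  show ?thesis
    unfolding has_cofactor_def
    by (rule exI, rule conjI, rule has_derivative_mult[OF f(1) g(1)]) (simp add: f(2) g(2) algebra_simps)
qed

lemma has_cofactor_divide:
  assumes "has_cofactor a f c x" "has_cofactor a g d x" "g x \<noteq> 0"
  shows "has_cofactor a (\<lambda>x. f x / g x) (c - d) x"
proof -
  obtain Df Dg where f: "(f has_derivative Df) (at x)" "Df (vf a x) = c * f x"
    and g: "(g has_derivative Dg) (at x)" "Dg (vf a x) = d * g x"
    using assms unfolding has_cofactor_def by blast
  show ?thesis
    unfolding has_cofactor_def
    by (rule exI, rule conjI, rule has_derivative_divide'[OF f(1) g(1) assms(3)])
       (simp add: f(2) g(2) assms(3) field_simps)
qed

lemma has_cofactor_nth: "has_cofactor a (\<lambda>x. x$j) (lform a {j<..} x - lform a {..<j} x) x"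
  unfolding has_cofactor_def
  by (rule exI, rule conjI, rule bounded_linear_imp_has_derivative[OF bounded_linear_vec_nth])
     (simp add: vf_def lform_def greaterThan_def lessThan_def mult.commute)

lemma has_cofactor_lform_down_closed:
  "(\<And>i j. i \<in> A \<Longrightarrow> j < i \<Longrightarrow> j \<in> A) \<Longrightarrow> has_cofactor a (lform a A) (lform a (-A) x) x"
  unfolding has_cofactor_def
  by (rule exI, rule conjI, rule has_derivative_lform) (simp add: lform_vf_down_closed mult.commute)

lemma has_cofactor_lform_up_closed:
  "(\<And>i j. i \<in> A \<Longrightarrow> i < j \<Longrightarrow> j \<in> A) \<Longrightarrow> has_cofactor a (lform a A) (- lform a (-A) x) x"
  unfolding has_cofactor_def
  by (rule exI, rule conjI, rule has_derivative_lform) (simp add: lform_vf_up_closed mult.commute)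

lemma first_integral_on_cofactor_zero:
  "open U \<Longrightarrow> (\<And>x. x \<in> U \<Longrightarrow> has_cofactor a F 0 x) \<Longrightarrow> first_integral_on (vf a) F U"
  unfolding first_integral_on_def has_cofactor_def by auto

lemma has_cofactor_nth_before_support:
  assumes "\<And>i. i \<le> j \<Longrightarrow> a$i = 0"
  shows "has_cofactor a (\<lambda>x. x$j) (lform a UNIV x) x"
proof -
  have "lform a {..j} x = 0" "lform a {..<j} x = 0"
    using assms by (auto simp: lform_def)
  then show ?thesis
    using has_cofactor_nth[of a j x] lform_Compl[of a "{..j}" x] by simp
qed

lemma has_cofactor_nth_after_support:
  assumes "\<And>i. j \<le> i \<Longrightarrow> a$i = 0"
  shows "has_cofactor a (\<lambda>x. x$j) (- lform a UNIV x) x"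
proof -
  have "lform a {j..} x = 0" "lform a {j<..} x = 0"
    using assms by (auto simp: lform_def)
  then show ?thesis
    using has_cofactor_nth[of a j x] lform_Compl[of a "{j..}" x] by simp
qed

lemma has_derivative_direction:
  fixes F :: "'a::real_normed_vector \<Rightarrow> real"
  assumes F: "(F has_derivative D) (at x)"
    and line: "((\<lambda>t. F (x + t *\<^sub>R v)) has_real_derivative k) (at 0)"
  shows "D v = k"
proof -
  have "((\<lambda>t. x + t *\<^sub>R v) has_derivative (\<lambda>t. t *\<^sub>R v)) (at 0)"
    by (intro derivative_eq_intros) auto
  from diff_chain_at[OF this] have "((\<lambda>t. F (x + t *\<^sub>R v)) has_derivative (\<lambda>t. D (t *\<^sub>R v))) (at 0)"
    using F by (simp add: o_def)
  moreover have "(\<lambda>t. D (t *\<^sub>R v)) = (*) (D v)"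
    using linear_scale[OF has_derivative_linear[OF F]] by (simp add: fun_eq_iff mult.commute)
  ultimately have "((\<lambda>t. F (x + t *\<^sub>R v)) has_real_derivative D v) (at 0)"
    by (simp add: has_field_derivative_def)
  then show ?thesis using line DERIV_unique by blast
qed

lemma has_derivative_direction_affine:
  fixes F :: "'a::real_normed_vector \<Rightarrow> real"
  assumes "(F has_derivative D) (at x)" "\<And>t. F (x + t *\<^sub>R v) = F x + t * k"
  shows "D v = k"
  by (rule has_derivative_direction[OF assms(1)]) (simp add: assms(2), intro derivative_eq_intros, auto)

lemma has_derivative_direction_invariant:
  fixes F :: "'a::real_normed_vector \<Rightarrow> real"
  assumes "(F has_derivative D) (at x)" "\<And>t. F (x + t *\<^sub>R v) = F x"
  shows "D v = 0"
  using has_derivative_direction_affine[of F D x v 0] assms by simp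

lemma open_dense_nonvanishing:
  fixes G :: "('a::{real_normed_vector,heine_borel} \<Rightarrow> real) set"
  assumes "finite G" "\<And>g. g \<in> G \<Longrightarrow> continuous_on UNIV g"
    and "\<And>g. g \<in> G \<Longrightarrow> closure {x. g x \<noteq> 0} = UNIV"
  shows "open {x. \<forall>g\<in>G. g x \<noteq> 0} \<and> closure {x. \<forall>g\<in>G. g x \<noteq> 0} = UNIV"
proof -
  have eq: "{x. \<forall>g\<in>G. g x \<noteq> 0} = \<Inter>((\<lambda>g. {x. g x \<noteq> 0}) ` G)" by auto
  have "open {x. g x \<noteq> 0}" if "g \<in> G" for g
    using assms(2)[OF that] by (intro open_Collect_neq continuous_on_const)
  moreover have "UNIV \<subseteq> closure (\<Inter>((\<lambda>g. {x. g x \<noteq> 0}) ` G))"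
    by (rule Baire) (use assms calculation in \<open>auto intro: countable_finite\<close>)
  ultimately show ?thesis unfolding eq using assms(1) by auto
qed

lemma independent_if_triangular:
  fixes D :: "'j \<Rightarrow> 'v \<Rightarrow> real" and \<rho> :: "'j \<Rightarrow> nat"
  assumes "finite J"
    and diagonal: "\<And>j. j \<in> J \<Longrightarrow> D j (v j) \<noteq> 0"
    and triangular: "\<And>i j. i \<in> J \<Longrightarrow> j \<in> J \<Longrightarrow> i \<noteq> j \<Longrightarrow> \<rho> j \<le> \<rho> i \<Longrightarrow> D i (v j) = 0"
    and combination: "\<And>w. (\<Sum>i\<in>J. c i * D i w) = 0"
  shows "j \<in> J \<Longrightarrow> c j = 0"
proof (induction "\<rho> j" arbitrary: j rule: less_induct)
  case less
  have "c i * D i (v j) = 0" if "i \<in> J - {j}" for i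
    using less that triangular[of i j] by (cases "\<rho> i < \<rho> j") auto
  then have "(\<Sum>i\<in>J. c i * D i (v j)) = c j * D j (v j)"
    using \<open>finite J\<close> less.prems by (simp add: sum.remove sum.neutral)
  then show ?case using combination[of "v j"] diagonal[OF less.prems] by simp
qed

text \<open>The quotient p / q plays the role of W; z is the index whose integral is dropped.\<close>

locale integral_family =
  fixes a :: "real^('n::{finite,linorder})" and f l z :: 'n
    and p q cp cq :: "real^('n::{finite,linorder}) \<Rightarrow> real"
  assumes a_first: "a$f \<noteq> 0" and a_last: "a$l \<noteq> 0"
    and support: "\<And>i. a$i \<noteq> 0 \<Longrightarrow> f \<le> i \<and> i \<le> l"
    and excluded: "z = f \<and> f < l \<or> a$z = 0 \<and> f = l"
    and poly_fun_p: "poly_fun p" and poly_fun_q: "poly_fun q"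
    and has_cofactor_p: "\<And>x. has_cofactor a p (cp x) x"
    and has_cofactor_q: "\<And>x. has_cofactor a q (cq x) x"
    and cofactor_diff: "\<And>x. cp x - cq x = lform a UNIV x"
    and dense_p: "closure {x. p x \<noteq> 0} = UNIV" and dense_q: "closure {x. q x \<noteq> 0} = UNIV"
    and invariant_pq: "\<And>x t j. j \<noteq> z \<Longrightarrow> a$j = 0 \<Longrightarrow>
      p (x + t *\<^sub>R axis j 1) = p x \<and> q (x + t *\<^sub>R axis j 1) = q x"
begin

definition integral_num where
  "integral_num j = (if j = l then lform a UNIV else if j \<in> {f<..<l} then (\<lambda>x. x$j)
     else if j < f then (\<lambda>x. x$j * q x) else (\<lambda>x. x$j * p x))"

definition integral_den where
  "integral_den j = (if j = l then (\<lambda>x. 1)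
     else if j \<in> {f<..<l} then (\<lambda>x. lform a {..j} x * lform a {j..} x)
     else if j < f then p else q)"

definition integral where
  "integral j = (\<lambda>x. integral_num j x / integral_den j x)"

lemma first_le_last: "f \<le> l"
  using support a_first by blast

lemma integral_last: "integral l = lform a UNIV"
  by (simp add: integral_def integral_num_def integral_den_def)

lemma integral_interior:
  "j \<in> {f<..<l} \<Longrightarrow> integral j = (\<lambda>x. x$j / (lform a {..j} x * lform a {j..} x))"
  by (auto simp: integral_def integral_num_def integral_den_def)

lemma integral_before: "j < f \<Longrightarrow> integral j = (\<lambda>x. x$j * q x / p x)"
  using first_le_last by (auto simp: integral_def integral_num_def integral_den_def)

lemma integral_after: "l < j \<Longrightarrow> integral j = (\<lambda>x. x$j * p x / q x)"
  using first_le_last by (auto simp: integral_def integral_num_def integral_den_def)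

lemma index_cases:
  assumes "j \<noteq> z"
  obtains "j = l" | "j \<in> {f<..<l}" | "j < f" | "l < j"
  using assms excluded first_le_last by (metis greaterThanLessThan_iff le_less linorder_neqE)

lemma poly_fun_integral_num: "poly_fun (integral_num j)"
  unfolding integral_num_def
  by (auto intro!: pf_mult pf_coord poly_fun_lform poly_fun_p poly_fun_q)

lemma poly_fun_integral_den: "poly_fun (integral_den j)"
  unfolding integral_den_def
  by (auto intro!: pf_mult pf_const poly_fun_lform poly_fun_p poly_fun_q)

lemma has_cofactor_integral:
  assumes "j \<noteq> z" "integral_den j x \<noteq> 0"
  shows "has_cofactor a (integral j) 0 x"
  using assms(1)
proof (cases rule: index_cases)
  case 1
  have "has_cofactor a (lform a UNIV) 0 x"
    using has_cofactor_lform_down_closed[of UNIV a x] by (simp add: lform_def)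
  from has_cofactor_divide[OF this has_cofactor_const[of a 1]] show ?thesis
    using 1 by (simp add: integral_def integral_num_def integral_den_def)
next
  case 2
  then have den: "integral_den j = (\<lambda>x. lform a {..j} x * lform a {j..} x)"
    by (auto simp: integral_den_def)
  have "has_cofactor a (lform a {..j}) (lform a {j<..} x) x"
    using has_cofactor_lform_down_closed[of "{..j}" a x] by simp
  moreover have "has_cofactor a (lform a {j..}) (- lform a {..<j} x) x"
    using has_cofactor_lform_up_closed[of "{j..}" a x] by simp
  ultimately have "has_cofactor a (integral_den j) (lform a {j<..} x - lform a {..<j} x) x"
    unfolding den using has_cofactor_mult by fastforce
  from has_cofactor_divide[OF has_cofactor_nth[of a j x] this assms(2)] show ?thesis
    using 2 by (auto simp: integral_def integral_num_def)
next
  case 3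
  then have num: "integral_num j = (\<lambda>x. x$j * q x)" and den: "integral_den j = p"
    using first_le_last by (auto simp: integral_num_def integral_den_def)
  have "a$i = 0" if "i \<le> j" for i
    using 3 that support by fastforce
  from has_cofactor_mult[OF has_cofactor_nth_before_support[of j a, OF this, of x] has_cofactor_q[of x]]
  have "has_cofactor a (integral_num j) (cp x) x"
    unfolding num using cofactor_diff[of x, symmetric] by (simp add: algebra_simps)
  from has_cofactor_divide[OF this has_cofactor_p] show ?thesis
    using assms(2) by (simp add: integral_def den)
next
  case 4
  then have num: "integral_num j = (\<lambda>x. x$j * p x)" and den: "integral_den j = q"
    using first_le_last by (auto simp: integral_num_def integral_den_def)
  have "a$i = 0" if "j \<le> i" for i
    using 4 that support by fastforce
  from has_cofactor_mult[OF has_cofactor_nth_after_support[of j a, OF this, of x] has_cofactor_p[of x]]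
  have "has_cofactor a (integral_num j) (cq x) x"
    unfolding num using cofactor_diff[of x, symmetric] by (simp add: algebra_simps)
  from has_cofactor_divide[OF this has_cofactor_q] show ?thesis
    using assms(2) by (simp add: integral_def den)
qed

definition critical_forms where
  "critical_forms = {p, q} \<union> (\<Union>j\<in>{f<..<l}. {lform a {..j}, lform a {j..}, lform a {..<j}})"

definition generic_points where
  "generic_points = {x. \<forall>g\<in>critical_forms. g x \<noteq> 0}"

lemma open_dense_generic_points: "open generic_points \<and> closure generic_points = UNIV"
  unfolding generic_points_def
proof (rule open_dense_nonvanishing)
  show "finite critical_forms" by (simp add: critical_forms_def)
  show "continuous_on UNIV g" if "g \<in> critical_forms" for g
    using that by (auto simp: critical_forms_def
        intro!: continuous_on_poly_fun poly_fun_lform poly_fun_p poly_fun_q)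
  show "closure {x. g x \<noteq> 0} = UNIV" if "g \<in> critical_forms" for g
  proof -
    have "closure {x. lform a A x \<noteq> 0} = UNIV" if "f \<in> A \<or> l \<in> A" for A
      using that a_first a_last closure_lform_nonzero by blast
    then show ?thesis
      using \<open>g \<in> critical_forms\<close> unfolding critical_forms_def
      by (elim UnE UN_E insertE) (simp_all add: dense_p dense_q less_imp_le)
  qed
qed

lemma integral_den_nonzero: "x \<in> generic_points \<Longrightarrow> integral_den j x \<noteq> 0"
  by (simp add: generic_points_def critical_forms_def integral_den_def)

lemma dense_integral_den: "closure {x. integral_den j x \<noteq> 0} = UNIV"
  using closure_mono[of generic_points "{x. integral_den j x \<noteq> 0}"] open_dense_generic_points
    integral_den_nonzero by blast

text \<open>For interior j the direction leaves H and every L_(>=i), i < j, unchanged.\<close>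

definition direction where
  "direction j = (if j \<in> {f<..<l} then axis j 1 - (a$j / a$l) *\<^sub>R axis l 1 else axis j 1)"

text \<open>The triangular order: moving along the direction of j changes no other integral of
  rank at least rank j.\<close>

definition rank where
  "rank j = (if j = l then Suc CARD('n) else if j \<in> {f<..<l} then Suc (card {j<..}) else 0)"

lemma rank_less_rank_last: "i \<noteq> l \<Longrightarrow> rank i < rank l"
proof -
  have "card {i<..} < CARD('n)" by (rule psubset_card_mono) auto
  then show "i \<noteq> l \<Longrightarrow> rank i < rank l" by (simp add: rank_def)
qed

lemma rank_ge_interior:
  assumes "j \<in> {f<..<l}" "i \<noteq> j" "rank j \<le> rank i"
  shows "i = l \<or> i \<in> {f<..<l} \<and> i < j"
proof (cases "i = l")
  case False
  with assms have i: "i \<in> {f<..<l}" and card: "card {j<..} \<le> card {i<..}"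
    by (auto simp: rank_def split: if_splits)
  have "\<not> j < i"
  proof
    assume "j < i"
    then have "card {i<..} < card {j<..}" by (intro psubset_card_mono) auto
    with card show False by simp
  qed
  with i assms(2) show ?thesis by auto
qed simp

lemma lform_shift_direction:
  assumes "j \<in> {f<..<l}"
  shows "lform a A (y + t *\<^sub>R direction j) =
    lform a A y + t * ((if j \<in> A then a$j else 0) - (if l \<in> A then a$j else 0))"
proof -
  have "linear (lform a A)" using bounded_linear_lform bounded_linear.linear by blast
  then have "lform a A (direction j) = (if j \<in> A then a$j else 0) - (if l \<in> A then a$j else 0)"
    using assms a_last by (simp add: direction_def linear_diff linear_scale lform_axis)
  then show ?thesis by (simp add: lform_add_scaleR)
qed

lemma integral_shift_axis_invariant:
  assumes "j \<noteq> z" "a$j = 0" "i \<noteq> j"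
  shows "integral i (y + t *\<^sub>R axis j 1) = integral i y"
proof -
  have "lform a A (y + t *\<^sub>R axis j 1) = lform a A y" for A
    using assms(2) by (simp add: lform_add_scaleR lform_axis)
  moreover have "(y + t *\<^sub>R axis j 1) $ i = y $ i"
    using assms(3) by (simp add: axis_def)
  ultimately show ?thesis
    using invariant_pq[OF assms(1,2)] by (simp add: integral_def integral_num_def integral_den_def)
qed

lemma integral_shift_invariant:
  assumes "i \<noteq> z" "j \<noteq> z" "i \<noteq> j" "rank j \<le> rank i"
  shows "integral i (y + t *\<^sub>R direction j) = integral i y"
proof -
  consider "j = l" | "j \<in> {f<..<l}" | "j < f \<or> l < j"
    using index_cases[OF assms(2)] by metis
  then show ?thesis
  proof cases
    case 1
    then show ?thesis using rank_less_rank_last[of i] assms(3,4) by simp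
  next
    case 2
    then have "i = l \<or> i \<in> {f<..<l} \<and> i < j" using rank_ge_interior assms(3,4) by blast
    moreover have "(y + t *\<^sub>R direction j) $ i = y $ i" if "i < j" for i
      using that 2 by (auto simp: direction_def axis_def)
    ultimately show ?thesis
      using 2 by (auto simp: integral_def integral_num_def integral_den_def lform_shift_direction)
  next
    case 3
    then have "a$j = 0" "direction j = axis j 1" using support by (fastforce simp: direction_def)+
    then show ?thesis using integral_shift_axis_invariant[OF assms(2) _ assms(3)] by metis
  qed
qed

lemma integral_derivative_direction_nonzero:
  assumes x: "x \<in> generic_points" and "j \<noteq> z" and D: "(integral j has_derivative D) (at x)"
  shows "D (direction j) \<noteq> 0"
  using assms(2)
proof (cases rule: index_cases)
  case 1
  then have "D (direction j) = a$l"
    by (intro has_derivative_direction_affine[OF D])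
      (simp add: integral_last direction_def lform_add_scaleR lform_axis)
  then show ?thesis using a_last by simp
next
  case 2
  let ?P = "lform a {..j} x" and ?S = "lform a {j..} x"
  have P: "?P \<noteq> 0" and S: "?S \<noteq> 0" and B: "lform a {..<j} x \<noteq> 0"
    using x 2 by (auto simp: generic_points_def critical_forms_def)
  have "(x + t *\<^sub>R direction j) $ j = x$j + t"
    and "lform a {..j} (x + t *\<^sub>R direction j) = ?P + t * a$j"
    and "lform a {j..} (x + t *\<^sub>R direction j) = ?S" for t
    using 2 lform_shift_direction[OF 2] by (auto simp: direction_def axis_def)
  then have "integral j (x + t *\<^sub>R direction j) = (x$j + t) / ((?P + t * a$j) * ?S)" for t
    using 2 by (simp add: integral_interior)
  moreover have "((\<lambda>t. (x$j + t) / ((?P + t * a$j) * ?S)) has_real_derivative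
      ?S * (?P - a$j * x$j) / (?P * ?S)\<^sup>2) (at 0)"
    using P S by (auto intro!: derivative_eq_intros simp: field_simps power2_eq_square)
  ultimately have "D (direction j) = ?S * lform a {..<j} x / (?P * ?S)\<^sup>2"
    using has_derivative_direction[OF D] by (simp add: lform_atMost)
  then show ?thesis using P S B by simp
next
  case 3
  have "a$j = 0" and dir: "direction j = axis j 1" using 3 support by (fastforce simp: direction_def)+
  then have "p (x + t *\<^sub>R axis j 1) = p x" "q (x + t *\<^sub>R axis j 1) = q x"
    and "(x + t *\<^sub>R axis j 1) $ j = x$j + t" for t
    using invariant_pq[OF assms(2)] by (auto simp: axis_def)
  moreover have "p x \<noteq> 0" "q x \<noteq> 0" using x by (auto simp: generic_points_def critical_forms_def)
  ultimately have "D (direction j) = q x / p x"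
    unfolding dir using 3
    by (intro has_derivative_direction_affine[OF D]) (simp add: integral_before field_simps)
  then show ?thesis using \<open>p x \<noteq> 0\<close> \<open>q x \<noteq> 0\<close> by simp
next
  case 4
  have "a$j = 0" and dir: "direction j = axis j 1" using 4 support by (fastforce simp: direction_def)+
  then have "p (x + t *\<^sub>R axis j 1) = p x" "q (x + t *\<^sub>R axis j 1) = q x"
    and "(x + t *\<^sub>R axis j 1) $ j = x$j + t" for t
    using invariant_pq[OF assms(2)] by (auto simp: axis_def)
  moreover have "p x \<noteq> 0" "q x \<noteq> 0" using x by (auto simp: generic_points_def critical_forms_def)
  ultimately have "D (direction j) = p x / q x"
    unfolding dir using 4
    by (intro has_derivative_direction_affine[OF D]) (simp add: integral_after field_simps)
  then show ?thesis using \<open>p x \<noteq> 0\<close> \<open>q x \<noteq> 0\<close> by simp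
qed

lemma open_integral_den: "open {x. integral_den j x \<noteq> 0}"
  by (intro open_Collect_neq continuous_on_poly_fun poly_fun_integral_den continuous_on_const)

lemma first_integral_on_integral:
  "j \<noteq> z \<Longrightarrow> first_integral_on (vf a) (integral j) {x. integral_den j x \<noteq> 0}"
  by (intro first_integral_on_cofactor_zero open_integral_den has_cofactor_integral) auto

lemma functionally_independent_integral:
  assumes inj: "inj_on \<sigma> {..<m}" and index: "\<And>k. k < m \<Longrightarrow> \<sigma> k \<noteq> z"
  shows "functionally_independent m (\<lambda>k. integral (\<sigma> k))"
  unfolding functionally_independent_def
proof (intro exI[of _ generic_points] conjI ballI)
  fix x assume x: "x \<in> generic_points"
  have "\<forall>k\<in>{..<m}. \<exists>D. (integral (\<sigma> k) has_derivative D) (at x)"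
    using has_cofactor_integral[OF index integral_den_nonzero[OF x]] unfolding has_cofactor_def by blast
  then obtain D where D: "\<And>k. k < m \<Longrightarrow> (integral (\<sigma> k) has_derivative D k) (at x)"
    using bchoice[of "{..<m}"] by (metis lessThan_iff)
  have diagonal: "D k (direction (\<sigma> k)) \<noteq> 0" if "k \<in> {..<m}" for k
    using that integral_derivative_direction_nonzero[OF x index D] by simp
  have triangular: "D i (direction (\<sigma> k)) = 0"
    if "i \<in> {..<m}" "k \<in> {..<m}" "i \<noteq> k" "rank (\<sigma> k) \<le> rank (\<sigma> i)" for i k
  proof (rule has_derivative_direction_invariant[OF D])
    show "i < m" using that by simp
    show "integral (\<sigma> i) (x + t *\<^sub>R direction (\<sigma> k)) = integral (\<sigma> i) x" for t
      using that inj by (intro integral_shift_invariant index) (auto dest: inj_onD)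
  qed
  have "c k = 0" if "\<forall>v. (\<Sum>i<m. c i * D i v) = 0" "k < m" for c k
    by (rule independent_if_triangular[of "{..<m}" D "\<lambda>k. direction (\<sigma> k)" "\<lambda>k. rank (\<sigma> k)"])
      (use diagonal triangular that in \<open>simp_all\<close>)
  then show "\<exists>D. (\<forall>k<m. (integral (\<sigma> k) has_derivative D k) (at x)) \<and>
      (\<forall>c. (\<forall>v. (\<Sum>k<m. c k * D k v) = 0) \<longrightarrow> (\<forall>k<m. c k = 0))"
    using D by blast
qed (use open_dense_generic_points in auto)

lemma rational_superintegrable:
  "(\<exists>P Q. (\<forall>k<CARD('n) - 1.
       poly_fun (P k) \<and> poly_fun (Q k) \<and> (\<exists>x. Q k x \<noteq> 0) \<and>
       first_integral_on (vf a) (\<lambda>x. P k x / Q k x) {x. Q k x \<noteq> 0}) \<and>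
     functionally_independent (CARD('n) - 1) (\<lambda>k x. P k x / Q k x))
   \<and> superintegrable (vf a)"
proof -
  let ?m = "CARD('n) - 1"
  have "card (- {z}) = ?m" by (simp add: Compl_eq_Diff_UNIV card_Diff_singleton)
  then obtain \<sigma> where \<sigma>: "bij_betw \<sigma> {..<?m} (- {z})"
    using ex_bij_betw_nat_finite[of "- {z}"] by (auto simp: atLeast0LessThan)
  then have index: "\<sigma> k \<noteq> z" if "k < ?m" for k
    using that by (auto dest: bij_betw_apply)
  have independent: "functionally_independent ?m (\<lambda>k. integral (\<sigma> k))"
    using \<sigma> index by (intro functionally_independent_integral) (auto simp: bij_betw_def)
  have nonempty: "\<exists>x. integral_den j x \<noteq> 0" for j
  proof -
    have "{x. integral_den j x \<noteq> 0} \<noteq> {}"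
      using dense_integral_den[of j] by (metis UNIV_not_empty closure_empty)
    then show ?thesis by blast
  qed
  define P Q where "P k = integral_num (\<sigma> k)" and "Q k = integral_den (\<sigma> k)" for k
  have PQ: "(\<lambda>x. P k x / Q k x) = integral (\<sigma> k)" for k
    by (simp add: P_def Q_def integral_def)
  have "superintegrable (vf a)"
    unfolding superintegrable_def
    using first_integral_on_integral[OF index] dense_integral_den independent
    by (intro exI[of _ "\<lambda>k. integral (\<sigma> k)"] exI[of _ "\<lambda>k. {x. integral_den (\<sigma> k) x \<noteq> 0}"]) simp
  moreover have "\<forall>k<?m. poly_fun (P k) \<and> poly_fun (Q k) \<and> (\<exists>x. Q k x \<noteq> 0) \<and>
      first_integral_on (vf a) (\<lambda>x. P k x / Q k x) {x. Q k x \<noteq> 0}"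
    unfolding PQ using first_integral_on_integral[OF index] nonempty
    by (simp add: P_def Q_def poly_fun_integral_num poly_fun_integral_den)
  moreover have "functionally_independent ?m (\<lambda>k x. P k x / Q k x)"
    unfolding PQ by (rule independent)
  ultimately show ?thesis by blast
qed

end

lemma integral_family_spread_support:
  fixes a :: "real^('n::{finite,linorder})"
  assumes "a$f \<noteq> 0" "a$l \<noteq> 0" "\<And>i. a$i \<noteq> 0 \<Longrightarrow> f \<le> i \<and> i \<le> l" "f < l"
  shows "integral_family a f l f (lform a {..f}) (lform a {f<..}) (lform a {f<..}) (\<lambda>x. - lform a {..f} x)"
proof
  show "has_cofactor a (lform a {..f}) (lform a {f<..} x) x" for x
    using has_cofactor_lform_down_closed[of "{..f}" a x] by simp
  show "has_cofactor a (lform a {f<..}) (- lform a {..f} x) x" for x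
    using has_cofactor_lform_up_closed[of "{f<..}" a x] by simp
  show "lform a {f<..} x - - lform a {..f} x = lform a UNIV x" for x
    using lform_Compl[of a "{..f}" x] by simp
  show "closure {x. lform a {..f} x \<noteq> 0} = UNIV" "closure {x. lform a {f<..} x \<noteq> 0} = UNIV"
    using closure_lform_nonzero[of f "{..f}" a] closure_lform_nonzero[of l "{f<..}" a] assms by auto
  show "lform a {..f} (x + t *\<^sub>R axis j 1) = lform a {..f} x \<and>
      lform a {f<..} (x + t *\<^sub>R axis j 1) = lform a {f<..} x" if "a$j = 0" for x t j
    using that by (simp add: lform_add_scaleR lform_axis)
qed (use assms in \<open>auto intro: poly_fun_lform\<close>)

lemma integral_family_single_support_before:
  fixes a :: "real^('n::{finite,linorder})"
  assumes "\<And>i. a$i \<noteq> 0 \<longleftrightarrow> i = f" "e < f"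
  shows "integral_family a f f e (\<lambda>x. x$e) (\<lambda>x. 1) (lform a UNIV) (\<lambda>x. 0)"
proof
  have zero: "a$i = 0" if "i \<le> e" for i
    using assms(1)[of i] assms(2) that by auto
  then show "has_cofactor a (\<lambda>x. x$e) (lform a UNIV x) x" for x
    by (rule has_cofactor_nth_before_support)
  show "(x + t *\<^sub>R axis j 1) $ e = x $ e \<and> (1::real) = 1" if "j \<noteq> e" for x t j
    using that by (simp add: axis_def)
  show "e = f \<and> f < f \<or> a$e = 0 \<and> f = f"
    using zero by simp
  show "closure {x. x$e \<noteq> (0::real)} = UNIV"
    by (rule closure_coordinate_nonzero)
qed (use assms in \<open>auto intro: pf_coord pf_const has_cofactor_const\<close>)

lemma integral_family_single_support_after:
  fixes a :: "real^('n::{finite,linorder})"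
  assumes "\<And>i. a$i \<noteq> 0 \<longleftrightarrow> i = f" "f < e"
  shows "integral_family a f f e (\<lambda>x. 1) (\<lambda>x. x$e) (\<lambda>x. 0) (\<lambda>x. - lform a UNIV x)"
proof
  have zero: "a$i = 0" if "e \<le> i" for i
    using assms(1)[of i] assms(2) that by auto
  then show "has_cofactor a (\<lambda>x. x$e) (- lform a UNIV x) x" for x
    by (rule has_cofactor_nth_after_support)
  show "(1::real) = 1 \<and> (x + t *\<^sub>R axis j 1) $ e = x $ e" if "j \<noteq> e" for x t j
    using that by (simp add: axis_def)
  show "e = f \<and> f < f \<or> a$e = 0 \<and> f = f"
    using zero by simp
  show "closure {x. x$e \<noteq> (0::real)} = UNIV"
    by (rule closure_coordinate_nonzero)
qed (use assms in \<open>auto intro: pf_coord pf_const has_cofactor_const\<close>)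

lemma integral_family_exists:
  fixes a :: "real^('n::{finite,linorder})"
  assumes "a \<noteq> 0" "CARD('n) \<noteq> 1"
  shows "\<exists>f l z p q cp cq. integral_family a f l z p q cp cq"
proof -
  define S where "S = {i. a$i \<noteq> 0}"
  have "S \<noteq> {}" using assms(1) by (auto simp: S_def vec_eq_iff)
  define f l where "f = Min S" and "l = Max S"
  have a_f: "a$f \<noteq> 0" and a_l: "a$l \<noteq> 0"
    using Min_in[OF _ \<open>S \<noteq> {}\<close>] Max_in[OF _ \<open>S \<noteq> {}\<close>] by (auto simp: f_def l_def S_def)
  have support: "f \<le> i \<and> i \<le> l" if "a$i \<noteq> 0" for i
    using that by (auto simp: f_def l_def S_def)
  show ?thesis
  proof (cases "f < l")
    case True
    then show ?thesis using integral_family_spread_support[OF a_f a_l support] by blast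
  next
    case False
    then have single: "a$i \<noteq> 0 \<longleftrightarrow> i = f" for i
      using support a_f by fastforce
    have "UNIV \<noteq> {f}"
    proof
      assume "UNIV = {f}"
      then have "CARD('n) = card {f}" by (simp only:)
      with assms(2) show False by simp
    qed
    then obtain e where "e \<noteq> f" by auto
    then consider "e < f" | "f < e" by (meson neqE)
    then show ?thesis
    proof cases
      case 1
      then show ?thesis using integral_family_single_support_before[OF single] by blast
    next
      case 2
      then show ?thesis using integral_family_single_support_after[OF single] by blast
    qed
  qed
qed

theorem theorem2p5:
  fixes a :: "real^'n::{finite,linorder}"
  assumes "a \<noteq> 0"
  shows "(\<exists>P Q. (\<forall>k<CARD('n) - 1.
              poly_fun (P k) \<and> poly_fun (Q k) \<and> (\<exists>x. Q k x \<noteq> 0) \<and>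
              first_integral_on (vf a) (\<lambda>x. P k x / Q k x) {x. Q k x \<noteq> 0}) \<and>
            functionally_independent (CARD('n) - 1) (\<lambda>k x. P k x / Q k x))
         \<and> superintegrable (vf a)"
proof (cases "CARD('n) = 1")
  case True
  have "functionally_independent 0 F" for F :: "nat \<Rightarrow> real^('n::{finite,linorder}) \<Rightarrow> real"
    unfolding functionally_independent_def by (intro exI[of _ UNIV]) auto
  then show ?thesis using True by (auto simp: superintegrable_def)
next
  case False
  then obtain f l z p q cp cq where "integral_family a f l z p q cp cq"
    using integral_family_exists[OF assms] by blast
  then show ?thesis by (rule integral_family.rational_superintegrable)
qed

end
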